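(* Let $\Sigma$ be a finite set, $I\subseteq\Sigma\times\Sigma$ a symmetric irreflexive relation, $M=M(\Sigma,I)$, $\Sigma_0\subseteq\Sigma$, $I_0=(\Sigma_0\times\Sigma_0)\cap I$ and $M_0=M(\Sigma_0,I_0)\subseteq M$. Let $B\subseteq M$ consist of the identity $1$ together with all elements $t\in M\setminus\{1\}$ such that the first factor $w_1$ of the Foata normal form $t=w_1w_2\cdots w_n$ contains only letters of $\Sigma\setminus\Sigma_0$. Then every $w\in M$ can be written as $w=au$ with $a\in M_0$ and $u\in B$, and this decomposition is unique: if $au=bv$ with $a,b\in M_0$, $u,v\in B$, then $a=b$ and $u=v$. Consequently $B$ is a basis of $\mathbb{Z}M$ as a free left $\mathbb{Z}M_0$-module.
   Context: For a finite alphabet $\Sigma$ and a symmetric irreflexive relation $I\subseteq \Sigma\times\Sigma$, the free partially commutative monoid $M(\Sigma,I)$ is the monoid with presentation $\langle \Sigma \mid ab=ba \text{ for all } (a,b)\in I\rangle$; $M(\Sigma_0,I_0)$ is identified with its (injective) canonical image in $M$. Let $D=(\Sigma\times\Sigma)\setminus I$. Fix a total order on $\Sigma$. An element $x\in M(\Sigma,I)$ is written in Foata normal form if either it is the empty word or $x=x_1x_2\cdots x_n$ with $n>0$ and nonempty words $x_i$ such that: each $x_i$ is a product of distinct pairwise commuting letters written in increasing order; and for each $1\le i<n$ and each letter $a$ of $x_{i+1}$ there is a letter $b$ of $x_i$ with $(a,b)\in D$. Every element of $M(\Sigma,I)$ has a unique Foata normal form. *)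

theory Defs
  imports Main
begin

(* Free partially commutative (trace) monoid M(Sigma, I), realised as the set of
   equivalence classes of words over Sigma modulo the congruence generated by
   ab = ba for (a,b) in I. *)

definition swap_step :: "('a \<times> 'a) set \<Rightarrow> 'a list \<Rightarrow> 'a list \<Rightarrow> bool" where
  "swap_step I u v \<longleftrightarrow>
     (\<exists>xs ys a b. (a, b) \<in> I \<and> u = xs @ [a, b] @ ys \<and> v = xs @ [b, a] @ ys)"

definition trace_equiv :: "('a \<times> 'a) set \<Rightarrow> 'a list \<Rightarrow> 'a list \<Rightarrow> bool" where
  "trace_equiv I = (sup (swap_step I) (swap_step I)\<inverse>\<inverse>)\<^sup>*\<^sup>*"

definition trace_of :: "('a \<times> 'a) set \<Rightarrow> 'a list \<Rightarrow> 'a list set" where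
  "trace_of I w = {v. trace_equiv I w v}"

definition trace_monoid :: "'a set \<Rightarrow> ('a \<times> 'a) set \<Rightarrow> 'a list set set" where
  "trace_monoid \<Sigma> I = trace_of I ` lists \<Sigma>"

definition tone :: "('a \<times> 'a) set \<Rightarrow> 'a list set" where
  "tone I = trace_of I []"

definition tmult :: "('a \<times> 'a) set \<Rightarrow> 'a list set \<Rightarrow> 'a list set \<Rightarrow> 'a list set" where
  "tmult I s t = trace_of I ((SOME u. u \<in> s) @ (SOME v. v \<in> t))"

definition tembed :: "('a \<times> 'a) set \<Rightarrow> 'a list set \<Rightarrow> 'a list set" where
  "tembed I s = trace_of I (SOME u. u \<in> s)"

definition is_foata_nf ::
  "'a::linorder set \<Rightarrow> ('a \<times> 'a) set \<Rightarrow> 'a list set \<Rightarrow> 'a list list \<Rightarrow> bool" where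
  "is_foata_nf \<Sigma> I t fs \<longleftrightarrow>
     (\<forall>x \<in> set fs. x \<noteq> [] \<and> set x \<subseteq> \<Sigma> \<and> sorted_wrt (<) x \<and>
        (\<forall>a \<in> set x. \<forall>b \<in> set x. a \<noteq> b \<longrightarrow> (a, b) \<in> I)) \<and>
     (\<forall>i. Suc i < length fs \<longrightarrow>
        (\<forall>a \<in> set (fs ! Suc i). \<exists>b \<in> set (fs ! i). (a, b) \<in> (\<Sigma> \<times> \<Sigma>) - I)) \<and>
     trace_of I (concat fs) = t"

definition fsupp :: "('b \<Rightarrow> int) \<Rightarrow> 'b set" where
  "fsupp f = {t. f t \<noteq> 0}"

definition monoid_ring :: "'b set \<Rightarrow> ('b \<Rightarrow> int) set" where
  "monoid_ring S = {f. finite (fsupp f) \<and> fsupp f \<subseteq> S}"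

definition mr_mult :: "('a \<times> 'a) set \<Rightarrow> ('a list set \<Rightarrow> int) \<Rightarrow> ('a list set \<Rightarrow> int)
                        \<Rightarrow> ('a list set \<Rightarrow> int)" where
  "mr_mult I x y = (\<lambda>t. \<Sum>(p, q) \<in> {(p, q). p \<in> fsupp x \<and> q \<in> fsupp y \<and> tmult I p q = t}.
                         x p * y q)"

definition mr_delta :: "'b \<Rightarrow> ('b \<Rightarrow> int)" where
  "mr_delta u = (\<lambda>t. if t = u then 1 else 0)"

definition is_free_left_basis ::
  "('a \<times> 'a) set \<Rightarrow> 'a list set set \<Rightarrow> 'a list set set \<Rightarrow> 'a list set set \<Rightarrow> bool" where
  "is_free_left_basis I M M0 B \<longleftrightarrow> B \<subseteq> M \<and>
     (\<forall>f \<in> monoid_ring M. \<exists>!c.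
        (\<forall>u. c u \<in> monoid_ring M0) \<and>
        (\<forall>u. u \<notin> B \<longrightarrow> c u = (\<lambda>_. 0)) \<and>
        finite {u. c u \<noteq> (\<lambda>_. 0)} \<and>
        f = (\<lambda>t. \<Sum>u \<in> {u. c u \<noteq> (\<lambda>_. 0)}. mr_mult I (c u) (mr_delta u) t))"

end

theory Submission
  imports Defs
begin

text \<open>
  Call a letter minimal in a word w if w is trace equivalent to a word starting with it.
  Repeatedly moving minimal letters from \<Sigma>0 to the front writes every word as a u with
  a over \<Sigma>0 and u without minimal letters in \<Sigma>0; this factorisation is unique up to trace
  equivalence, because a minimal letter of s t is minimal in s or in t and traces are
  left cancellative. The minimal letters of a nonempty trace are exactly the letters of the
  first factor of its Foata normal form, so the traces u are precisely the elements of B.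
  Unique factorisation M = M0 B then makes B a basis of the free left ZM0-module ZM: the
  coefficient of u in f is a \<mapsto> f (a u).
\<close>

lemma trace_equiv_symclp: "trace_equiv I = (symclp (swap_step I))\<^sup>*\<^sup>*"
  by (simp add: trace_equiv_def symclp_pointfree)

lemma equivp_trace_equiv: "equivp (trace_equiv I)"
  by (simp add: trace_equiv_symclp)

lemma trace_equiv_refl [simp]: "trace_equiv I w w"
  using equivp_reflp[OF equivp_trace_equiv] .

lemma trace_equiv_sym: "trace_equiv I u v \<Longrightarrow> trace_equiv I v u"
  using equivp_symp[OF equivp_trace_equiv] .

lemma trace_equiv_trans: "trace_equiv I u v \<Longrightarrow> trace_equiv I v w \<Longrightarrow> trace_equiv I u w"
  using equivp_transp[OF equivp_trace_equiv] .

lemma trace_equiv_eq_rtranclp_swap_step: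
  assumes "sym I"
  shows "trace_equiv I = (swap_step I)\<^sup>*\<^sup>*"
proof -
  have "symp (swap_step I)"
    using assms unfolding swap_step_def symp_def by (blast dest: symD)
  then show ?thesis by (simp add: trace_equiv_symclp symp_symclp_eq)
qed

lemma trace_equiv_invariant:
  assumes "\<And>u v. swap_step I u v \<Longrightarrow> f u = f v" and "trace_equiv I u v"
  shows "f u = f v"
  using assms(2) unfolding trace_equiv_symclp
  by (induction rule: rtranclp_induct) (auto elim!: symclpE dest!: assms(1))

lemma trace_equiv_set: "trace_equiv I u v \<Longrightarrow> set u = set v"
  by (rule trace_equiv_invariant) (auto simp: swap_step_def)

lemma trace_equiv_length: "trace_equiv I u v \<Longrightarrow> length u = length v"
  by (rule trace_equiv_invariant) (auto simp: swap_step_def)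

lemma trace_equiv_append_context:
  assumes "trace_equiv I u v"
  shows "trace_equiv I (xs @ u @ ys) (xs @ v @ ys)"
proof -
  have "swap_step I (xs @ u' @ ys) (xs @ v' @ ys)" if "swap_step I u' v'" for u' v'
    using that unfolding swap_step_def by (metis append.assoc)
  then have step: "symclp (swap_step I) (xs @ u' @ ys) (xs @ v' @ ys)"
    if "symclp (swap_step I) u' v'" for u' v'
    using that by (auto elim: symclpE intro: symclpI)
  show ?thesis
    using assms unfolding trace_equiv_symclp
    by (induction rule: rtranclp_induct) (auto intro: rtranclp.rtrancl_into_rtrancl step)
qed

lemma trace_equiv_Cons: "trace_equiv I u v \<Longrightarrow> trace_equiv I (x # u) (x # v)"
  using trace_equiv_append_context[of I u v "[x]" "[]"] by simp

lemma trace_equiv_append_left: "trace_equiv I u v \<Longrightarrow> trace_equiv I (xs @ u) (xs @ v)"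
  using trace_equiv_append_context[of I u v xs "[]"] by simp

lemma trace_equiv_append_right: "trace_equiv I u v \<Longrightarrow> trace_equiv I (u @ ys) (v @ ys)"
  using trace_equiv_append_context[of I u v "[]" ys] by simp

lemma trace_equiv_swap: "(a, b) \<in> I \<Longrightarrow> trace_equiv I (xs @ a # b # ys) (xs @ b # a # ys)"
  unfolding trace_equiv_symclp swap_step_def by (rule r_into_rtranclp, rule symclpI1) auto

lemma trace_equiv_mono:
  assumes "I \<subseteq> J" and "trace_equiv I u v"
  shows "trace_equiv J u v"
proof -
  have "swap_step I x y \<Longrightarrow> swap_step J x y" for x y
    using assms(1) unfolding swap_step_def by blast
  then show ?thesis
    using assms(2) unfolding trace_equiv_symclp
    by (elim mono_rtranclp[rule_format, rotated]) (auto elim!: symclpE intro: symclpI)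
qed

lemma trace_equiv_move_to_front:
  assumes "sym I" and "\<forall>c\<in>set s. (x, c) \<in> I"
  shows "trace_equiv I (s @ x # t) (x # s @ t)"
  using assms(2)
proof (induction s)
  case (Cons c s)
  have "(c, x) \<in> I" using Cons.prems assms(1) by (auto dest: symD)
  then have "trace_equiv I (c # x # s @ t) (x # c # s @ t)"
    using trace_equiv_swap[of c x I "[]"] by simp
  then show ?case using Cons trace_equiv_Cons trace_equiv_trans by fastforce
qed simp

definition front_residual :: "('a \<times> 'a) set \<Rightarrow> 'a \<Rightarrow> 'a list \<Rightarrow> 'a list \<Rightarrow> bool" where
  "front_residual I x w p \<longleftrightarrow> x \<in> set w \<and>
     (\<forall>c\<in>set (takeWhile (\<lambda>y. y \<noteq> x) w). (x, c) \<in> I) \<and> trace_equiv I p (remove1 x w)"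

lemma front_residual_swap_step:
  assumes "irrefl I" and "swap_step I u v" and "front_residual I x u p"
  shows "front_residual I x v p"
proof -
  obtain xs ys a b where ab: "(a, b) \<in> I" "u = xs @ a # b # ys" "v = xs @ b # a # ys"
    using assms(2) unfolding swap_step_def by auto
  have "a \<noteq> b" using ab(1) assms(1) by (auto simp: irrefl_def)
  let ?pre = "takeWhile (\<lambda>y. y \<noteq> x)"
  have "set (?pre v) \<subseteq> set (?pre u) \<union> {c. (x, c) \<in> I} \<and>
        trace_equiv I (remove1 x u) (remove1 x v)"
  proof (cases "x \<in> set xs")
    case True
    then show ?thesis using ab by (auto simp: remove1_append intro: trace_equiv_swap)
  next
    case False
    have pre: "?pre (xs @ L) = xs @ ?pre L" for L
      by (rule takeWhile_append2) (use False in auto)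
    consider "a = x" | "b = x" | "a \<noteq> x" "b \<noteq> x" by blast
    then show ?thesis
      using False \<open>a \<noteq> b\<close> ab by cases (auto simp: remove1_append pre intro: trace_equiv_swap)
  qed
  moreover have "set v = set u" using ab by auto
  ultimately show ?thesis
    using assms(3) trace_equiv_trans unfolding front_residual_def by blast
qed

lemma trace_equiv_Cons_iff:
  assumes "sym I" and "irrefl I"
  shows "trace_equiv I (x # p) w \<longleftrightarrow> front_residual I x w p"
proof
  assume "trace_equiv I (x # p) w"
  then have "(swap_step I)\<^sup>*\<^sup>* (x # p) w"
    by (simp add: trace_equiv_eq_rtranclp_swap_step[OF assms(1)])
  then show "front_residual I x w p"
  proof (induction rule: rtranclp_induct)
    case base
    then show ?case by (simp add: front_residual_def)
  next
    case (step v w)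
    then show ?case using front_residual_swap_step[OF assms(2)] by blast
  qed
next
  assume "front_residual I x w p"
  then have "x \<in> set w" and commute: "\<forall>c\<in>set (takeWhile (\<lambda>y. y \<noteq> x) w). (x, c) \<in> I"
    and residual: "trace_equiv I p (remove1 x w)"
    unfolding front_residual_def by auto
  obtain s t where w: "w = s @ x # t" "x \<notin> set s"
    using split_list_first[OF \<open>x \<in> set w\<close>] by blast
  have "takeWhile (\<lambda>y. y \<noteq> x) w = s"
    unfolding w(1) by (subst takeWhile_append2) (use w(2) in auto)
  moreover have "remove1 x w = s @ t" using w by (simp add: remove1_append)
  ultimately have "trace_equiv I (x # p) (x # s @ t)" and "trace_equiv I (x # s @ t) w"
    using residual commute w(1) trace_equiv_move_to_front[OF assms(1), of s x t]
    by (auto intro: trace_equiv_Cons dest: trace_equiv_sym)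
  then show "trace_equiv I (x # p) w" by (rule trace_equiv_trans)
qed

lemma trace_equiv_Cons_cancel:
  assumes "sym I" and "irrefl I" and "trace_equiv I (x # p) (x # q)"
  shows "trace_equiv I p q"
  using assms by (simp add: trace_equiv_Cons_iff front_residual_def)

lemma trace_equiv_Cons_Cons:
  assumes "sym I" and "irrefl I" and "trace_equiv I (x # p) (y # q)" and "x \<noteq> y"
  shows "(x, y) \<in> I \<and> (\<exists>r. trace_equiv I p (y # r) \<and> trace_equiv I q (x # r))"
proof -
  have "front_residual I x (y # q) p"
    using assms(3) by (simp add: trace_equiv_Cons_iff[OF assms(1,2)])
  then have "(x, y) \<in> I" and "trace_equiv I p (y # remove1 x q)"
    and "front_residual I x q (remove1 x q)"
    using assms(4) unfolding front_residual_def by auto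
  moreover have "trace_equiv I q (x # remove1 x q)"
    using \<open>front_residual I x q (remove1 x q)\<close>
    by (simp add: trace_equiv_Cons_iff[OF assms(1,2)] trace_equiv_sym)
  ultimately show ?thesis by blast
qed

definition min_letters :: "('a \<times> 'a) set \<Rightarrow> 'a list \<Rightarrow> 'a set" where
  "min_letters I w = {x. \<exists>p. trace_equiv I w (x # p)}"

lemma min_letters_subset_set: "min_letters I w \<subseteq> set w"
  unfolding min_letters_def by (auto dest: trace_equiv_set)

lemma min_letters_cong: "trace_equiv I u v \<Longrightarrow> min_letters I u = min_letters I v"
  unfolding min_letters_def by (blast intro: trace_equiv_sym trace_equiv_trans)

lemma min_letters_commute:
  assumes "sym I" and "irrefl I" and "x \<in> min_letters I w" and "y \<in> min_letters I w" and "x \<noteq> y"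
  shows "(x, y) \<in> I"
proof -
  obtain p q where "trace_equiv I w (x # p)" and "trace_equiv I w (y # q)"
    using assms(3,4) unfolding min_letters_def by blast
  then have "trace_equiv I (x # p) (y # q)" by (blast intro: trace_equiv_sym trace_equiv_trans)
  then show ?thesis using trace_equiv_Cons_Cons[OF assms(1,2) _ assms(5)] by blast
qed

lemma mem_min_letters_iff:
  assumes "sym I" and "irrefl I"
  shows "x \<in> min_letters I w \<longleftrightarrow>
         x \<in> set w \<and> (\<forall>c\<in>set (takeWhile (\<lambda>y. y \<noteq> x) w). (x, c) \<in> I)"
proof -
  have "trace_equiv I w (x # p) \<longleftrightarrow> trace_equiv I (x # p) w" for p
    using trace_equiv_sym by blast
  then have "x \<in> min_letters I w \<longleftrightarrow> (\<exists>p. trace_equiv I (x # p) w)"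
    unfolding min_letters_def by simp
  also have "\<dots> \<longleftrightarrow> (\<exists>p. front_residual I x w p)"
    by (simp add: trace_equiv_Cons_iff[OF assms])
  also have "\<dots> \<longleftrightarrow> x \<in> set w \<and> (\<forall>c\<in>set (takeWhile (\<lambda>y. y \<noteq> x) w). (x, c) \<in> I)"
    unfolding front_residual_def by (auto intro: trace_equiv_refl)
  finally show ?thesis .
qed

lemma min_letters_append_iff:
  assumes "sym I" and "irrefl I" and "x \<notin> set s"
  shows "x \<in> min_letters I (s @ t) \<longleftrightarrow> (\<forall>c\<in>set s. (x, c) \<in> I) \<and> x \<in> min_letters I t"
proof -
  have "takeWhile (\<lambda>y. y \<noteq> x) (s @ t) = s @ takeWhile (\<lambda>y. y \<noteq> x) t"
    by (rule takeWhile_append2) (use assms(3) in auto)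
  then show ?thesis using assms(3) by (auto simp: mem_min_letters_iff[OF assms(1,2)])
qed

lemma min_letters_append:
  assumes "sym I" and "irrefl I" and "x \<in> min_letters I (s @ t)"
  shows "x \<in> min_letters I s \<or> x \<in> min_letters I t"
proof (cases "x \<in> set s")
  case True
  then have "takeWhile (\<lambda>y. y \<noteq> x) (s @ t) = takeWhile (\<lambda>y. y \<noteq> x) s"
    by (intro takeWhile_append1) auto
  then show ?thesis using assms(3) True by (auto simp: mem_min_letters_iff[OF assms(1,2)])
next
  case False
  then show ?thesis using min_letters_append_iff[OF assms(1,2) False] assms(3) by blast
qed

lemma min_letters_prefix:
  assumes "sym I" and "irrefl I"
  shows "distinct ys \<Longrightarrow> set ys \<subseteq> min_letters I w \<Longrightarrow> \<exists>w'. trace_equiv I w (ys @ w')"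
proof (induction ys arbitrary: w)
  case (Cons y ys)
  obtain q where q: "trace_equiv I w (y # q)"
    using Cons.prems unfolding min_letters_def by auto
  have "set ys \<subseteq> min_letters I q"
  proof
    fix z assume z: "z \<in> set ys"
    then obtain r where "trace_equiv I w (z # r)"
      using Cons.prems unfolding min_letters_def by auto
    then have "trace_equiv I (y # q) (z # r)"
      using trace_equiv_trans[OF trace_equiv_sym[OF q]] by blast
    moreover have "y \<noteq> z" using Cons.prems(1) z by auto
    ultimately show "z \<in> min_letters I q"
      using trace_equiv_Cons_Cons[OF assms] unfolding min_letters_def by blast
  qed
  then obtain w' where "trace_equiv I q (ys @ w')"
    using Cons.IH Cons.prems(1) by auto
  then have "trace_equiv I w ((y # ys) @ w')"
    using trace_equiv_trans[OF q trace_equiv_Cons] by simp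
  then show ?case by blast
qed (auto intro: trace_equiv_refl)

lemma trace_of_eq_iff: "trace_of I u = trace_of I v \<longleftrightarrow> trace_equiv I u v"
proof
  assume "trace_of I u = trace_of I v"
  then show "trace_equiv I u v"
    unfolding trace_of_def by (metis mem_Collect_eq trace_equiv_refl)
next
  assume "trace_equiv I u v"
  then show "trace_of I u = trace_of I v"
    unfolding trace_of_def using trace_equiv_sym trace_equiv_trans by blast
qed

lemma is_foata_nf_Nil: "is_foata_nf \<Sigma> I t [] \<longleftrightarrow> t = trace_of I []"
  by (auto simp: is_foata_nf_def)

lemma is_foata_nf_Cons:
  "is_foata_nf \<Sigma> I t (f # fs) \<longleftrightarrow>
     f \<noteq> [] \<and> set f \<subseteq> \<Sigma> \<and> sorted_wrt (<) f \<and>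
     (\<forall>a\<in>set f. \<forall>b\<in>set f. a \<noteq> b \<longrightarrow> (a, b) \<in> I) \<and>
     (fs \<noteq> [] \<longrightarrow> (\<forall>a\<in>set (hd fs). \<exists>b\<in>set f. (a, b) \<in> \<Sigma> \<times> \<Sigma> - I)) \<and>
     is_foata_nf \<Sigma> I (trace_of I (concat fs)) fs \<and> trace_of I (f @ concat fs) = t"
proof -
  have "(\<forall>i. Suc i < length (f # fs) \<longrightarrow> P i) \<longleftrightarrow>
        (fs \<noteq> [] \<longrightarrow> P 0) \<and> (\<forall>i. Suc i < length fs \<longrightarrow> P (Suc i))" for P
    by (cases fs) (simp_all add: All_less_Suc2 flip: all_conj_distrib)
  then show ?thesis
    unfolding is_foata_nf_def by (auto simp: hd_conv_nth)
qed

lemma foata_hd_subset_min_letters: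
  assumes "sym I" and "is_foata_nf \<Sigma> I t (f # fs)"
  shows "set f \<subseteq> min_letters I (f @ concat fs)"
proof
  fix a assume "a \<in> set f"
  then obtain s r where f: "f = s @ a # r" and "a \<notin> set s"
    using split_list_first by metis
  then have "\<forall>c\<in>set s. (a, c) \<in> I"
    using assms(2) by (auto simp: is_foata_nf_Cons)
  then have "trace_equiv I (s @ a # r @ concat fs) (a # s @ r @ concat fs)"
    by (rule trace_equiv_move_to_front[OF assms(1)])
  then show "a \<in> min_letters I (f @ concat fs)"
    unfolding min_letters_def f by auto
qed

lemma min_letters_subset_foata_hd:
  assumes "sym I" and "irrefl I"
  shows "is_foata_nf \<Sigma> I t fs \<Longrightarrow> min_letters I (concat fs) \<subseteq> set (hd fs)"
proof (induction fs arbitrary: t)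
  case Nil
  then show ?case using min_letters_subset_set[of I "[]"] by simp
next
  case (Cons f fs)
  show ?case
  proof
    fix x assume x: "x \<in> min_letters I (concat (f # fs))"
    show "x \<in> set (hd (f # fs))"
    proof (rule ccontr)
      assume "x \<notin> set (hd (f # fs))"
      then have commute: "\<forall>c\<in>set f. (x, c) \<in> I" and "x \<in> min_letters I (concat fs)"
        using x min_letters_append_iff[OF assms] by auto
      moreover have "fs \<noteq> []"
        using \<open>x \<in> min_letters I (concat fs)\<close> min_letters_subset_set by fastforce
      moreover have "is_foata_nf \<Sigma> I (trace_of I (concat fs)) fs"
        and depends: "fs \<noteq> [] \<longrightarrow> (\<forall>a\<in>set (hd fs). \<exists>b\<in>set f. (a, b) \<in> \<Sigma> \<times> \<Sigma> - I)"
        using Cons.prems by (simp_all add: is_foata_nf_Cons)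
      ultimately have "x \<in> set (hd fs)" and "fs \<noteq> []" using Cons.IH by blast+
      with commute depends show False by blast
    qed
  qed
qed

lemma foata_hd_eq_min_letters:
  assumes "sym I" and "irrefl I" and "is_foata_nf \<Sigma> I (trace_of I w) fs" and "w \<noteq> []"
  shows "fs \<noteq> [] \<and> set (hd fs) = min_letters I w"
proof -
  have "trace_equiv I (concat fs) w"
    using assms(3) by (simp add: is_foata_nf_def trace_of_eq_iff)
  then have "concat fs \<noteq> []" and min: "min_letters I (concat fs) = min_letters I w"
    using assms(4) trace_equiv_length min_letters_cong by fastforce+
  then obtain f fs' where "fs = f # fs'" by (cases fs) auto
  then show ?thesis
    using min assms foata_hd_subset_min_letters[OF assms(1)] min_letters_subset_foata_hd[OF assms(1,2)]
    by fastforce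
qed

lemma foata_nf_exists:
  assumes "I \<subseteq> \<Sigma> \<times> \<Sigma>" and "sym I" and "irrefl I"
  shows "w \<in> lists \<Sigma> \<Longrightarrow> \<exists>fs. is_foata_nf \<Sigma> I (trace_of I w) fs"
proof (induction "length w" arbitrary: w rule: less_induct)
  case less
  show ?case
  proof (cases "w = []")
    case True
    then show ?thesis using is_foata_nf_Nil by blast
  next
    case False
    then obtain y q where "w = y # q" by (cases w) auto
    then have "y \<in> min_letters I w" unfolding min_letters_def by (auto intro: trace_equiv_refl)
    define f where "f = sorted_list_of_set (min_letters I w)"
    have min_fin: "finite (min_letters I w)"
      using finite_subset[OF min_letters_subset_set] by simp
    then have set_f: "set f = min_letters I w" and "distinct f" and "sorted_wrt (<) f"
      unfolding f_def by auto
    then obtain w' where w': "trace_equiv I w (f @ w')"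
      using min_letters_prefix[OF assms(2,3)] by blast
    have "f \<noteq> []" using set_f \<open>y \<in> min_letters I w\<close> by auto
    then have "length w' < length w" using trace_equiv_length[OF w'] by simp
    moreover have "set w = set f \<union> set w'" using trace_equiv_set[OF w'] by simp
    then have "w' \<in> lists \<Sigma>" and "set f \<subseteq> \<Sigma>" using less.prems by auto
    ultimately obtain fs where fs: "is_foata_nf \<Sigma> I (trace_of I w') fs"
      using less.hyps by blast
    have "\<exists>b\<in>set f. (a, b) \<in> \<Sigma> \<times> \<Sigma> - I" if "fs \<noteq> []" and a: "a \<in> set (hd fs)" for a
    proof -
      obtain g gs where "fs = g # gs" using \<open>fs \<noteq> []\<close> by (cases fs) auto
      then have "a \<in> \<Sigma>" and "a \<in> min_letters I (concat fs)"
        using a fs foata_hd_subset_min_letters[OF assms(2)] by (auto simp: is_foata_nf_Cons)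
      moreover have "trace_equiv I (concat fs) w'"
        using fs by (simp add: is_foata_nf_def trace_of_eq_iff)
      ultimately have "a \<in> min_letters I w'" using min_letters_cong by blast
      show ?thesis
      proof (cases "a \<in> set f")
        case True
        then show ?thesis using \<open>a \<in> \<Sigma>\<close> assms(3) by (auto simp: irrefl_def)
      next
        case False
        have "a \<notin> min_letters I (f @ w')"
          using False set_f min_letters_cong[OF w'] by simp
        then have "\<exists>b\<in>set f. (a, b) \<notin> I"
          using False \<open>a \<in> min_letters I w'\<close> min_letters_append_iff[OF assms(2,3)] by blast
        then show ?thesis using \<open>a \<in> \<Sigma>\<close> \<open>set f \<subseteq> \<Sigma>\<close> by blast
      qed
    qed
    moreover have "\<forall>a\<in>set f. \<forall>b\<in>set f. a \<noteq> b \<longrightarrow> (a, b) \<in> I"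
      using set_f min_letters_commute[OF assms(2,3)] by blast
    moreover have "is_foata_nf \<Sigma> I (trace_of I (concat fs)) fs"
      using fs by (simp add: is_foata_nf_def)
    moreover have "trace_of I (f @ concat fs) = trace_of I w"
    proof -
      have "trace_equiv I (concat fs) w'"
        using fs by (simp add: is_foata_nf_def trace_of_eq_iff)
      then show ?thesis
        using w' trace_equiv_append_left trace_equiv_sym trace_equiv_trans trace_of_eq_iff by metis
    qed
    ultimately have "is_foata_nf \<Sigma> I (trace_of I w) (f # fs)"
      using \<open>f \<noteq> []\<close> \<open>set f \<subseteq> \<Sigma>\<close> \<open>sorted_wrt (<) f\<close> by (simp add: is_foata_nf_Cons)
    then show ?thesis by blast
  qed
qed

lemma trace_of_eq_tone_iff: "trace_of I w = tone I \<longleftrightarrow> w = []"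
  using trace_equiv_length by (fastforce simp: tone_def trace_of_eq_iff)

lemma foata_hd_disjoint_iff:
  assumes "I \<subseteq> \<Sigma> \<times> \<Sigma>" and "sym I" and "irrefl I" and "w \<in> lists \<Sigma>"
  shows "(trace_of I w = tone I \<or> (trace_of I w \<noteq> tone I \<and>
           (\<exists>fs. is_foata_nf \<Sigma> I (trace_of I w) fs \<and> set (hd fs) \<subseteq> \<Sigma> - \<Sigma>0)))
         \<longleftrightarrow> min_letters I w \<inter> \<Sigma>0 = {}"
proof (cases "w = []")
  case True
  then show ?thesis using min_letters_subset_set[of I w] by (auto simp: trace_of_eq_tone_iff)
next
  case False
  obtain fs where fs: "is_foata_nf \<Sigma> I (trace_of I w) fs"
    using foata_nf_exists[OF assms] by blast
  have hd_fs: "set (hd gs) = min_letters I w \<and> set (hd gs) \<subseteq> \<Sigma>"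
    if "is_foata_nf \<Sigma> I (trace_of I w) gs" for gs
    using that foata_hd_eq_min_letters[OF assms(2,3) that False]
    by (metis is_foata_nf_def list.set_sel(1))
  then have "set (hd fs) \<subseteq> \<Sigma> - \<Sigma>0 \<longleftrightarrow> min_letters I w \<inter> \<Sigma>0 = {}"
    using fs by blast
  then show ?thesis using False fs hd_fs by (auto simp: trace_of_eq_tone_iff)
qed

lemma trace_equiv_decomp_exists:
  "w \<in> lists \<Sigma> \<Longrightarrow> \<exists>a\<in>lists \<Sigma>0. \<exists>u\<in>lists \<Sigma>. min_letters I u \<inter> \<Sigma>0 = {} \<and> trace_equiv I w (a @ u)"
proof (induction "length w" arbitrary: w rule: less_induct)
  case less
  show ?case
  proof (cases "min_letters I w \<inter> \<Sigma>0 = {}")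
    case True
    then show ?thesis using less.prems by (intro bexI[of _ "[]"] bexI[of _ w]) auto
  next
    case False
    then obtain x q where "x \<in> \<Sigma>0" and xq: "trace_equiv I w (x # q)"
      unfolding min_letters_def by blast
    then have "length q < length w" and "q \<in> lists \<Sigma>"
      using less.prems trace_equiv_length[OF xq] trace_equiv_set[OF xq] by auto
    then obtain a u where "a \<in> lists \<Sigma>0" "u \<in> lists \<Sigma>" "min_letters I u \<inter> \<Sigma>0 = {}"
      and "trace_equiv I q (a @ u)"
      using less.hyps by blast
    moreover have "trace_equiv I w ((x # a) @ u)"
      using trace_equiv_trans[OF xq trace_equiv_Cons[OF \<open>trace_equiv I q (a @ u)\<close>]] by simp
    ultimately show ?thesis using \<open>x \<in> \<Sigma>0\<close> by (intro bexI[of _ "x # a"] bexI[of _ u]) auto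
  qed
qed

lemma trace_equiv_decomp_unique:
  assumes "sym I" and "irrefl I"
  shows "a \<in> lists \<Sigma>0 \<Longrightarrow> b \<in> lists \<Sigma>0 \<Longrightarrow>
     min_letters I u \<inter> \<Sigma>0 = {} \<Longrightarrow> min_letters I v \<inter> \<Sigma>0 = {} \<Longrightarrow>
     trace_equiv I (a @ u) (b @ v) \<Longrightarrow> trace_equiv I a b \<and> trace_equiv I u v"
proof (induction a arbitrary: b)
  case Nil
  show ?case
  proof (cases b)
    case (Cons y b')
    then have "y \<in> min_letters I u"
      using Nil.prems(5) unfolding min_letters_def by auto
    then show ?thesis using Cons Nil.prems(2,3) by auto
  qed (use Nil.prems in auto)
next
  case (Cons x a)
  have "x \<in> min_letters I (b @ v)"
    using Cons.prems(5) trace_equiv_sym unfolding min_letters_def by fastforce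
  moreover have "x \<notin> min_letters I v" using Cons.prems(1,4) by auto
  ultimately obtain b' where b': "trace_equiv I b (x # b')"
    using min_letters_append[OF assms] unfolding min_letters_def by blast
  then have "b' \<in> lists \<Sigma>0" using Cons.prems(2) trace_equiv_set by fastforce
  have "trace_equiv I (x # a @ u) (x # b' @ v)"
    using trace_equiv_trans[OF Cons.prems(5) trace_equiv_append_right[OF b']] by simp
  then have "trace_equiv I (a @ u) (b' @ v)" by (rule trace_equiv_Cons_cancel[OF assms])
  then have "trace_equiv I a b' \<and> trace_equiv I u v"
    using Cons.IH \<open>b' \<in> lists \<Sigma>0\<close> Cons.prems(1,3,4) by simp
  then show ?case using trace_equiv_trans[OF trace_equiv_Cons trace_equiv_sym[OF b']] by blast
qed

lemma trace_equiv_some_trace_of: "trace_equiv I w (SOME v. v \<in> trace_of I w)"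
  using someI[of "\<lambda>v. v \<in> trace_of I w" w] unfolding trace_of_def by simp

lemma tmult_trace_of: "tmult I (trace_of I u) (trace_of I v) = trace_of I (u @ v)"
proof -
  have "trace_equiv I (u @ v) ((SOME u'. u' \<in> trace_of I u) @ (SOME v'. v' \<in> trace_of I v))"
    using trace_equiv_append_right[OF trace_equiv_some_trace_of]
      trace_equiv_append_left[OF trace_equiv_some_trace_of] by (rule trace_equiv_trans)
  then show ?thesis unfolding tmult_def trace_of_eq_iff by (rule trace_equiv_sym)
qed

lemma tembed_trace_of:
  assumes "I0 \<subseteq> I"
  shows "tembed I (trace_of I0 w) = trace_of I w"
  unfolding tembed_def trace_of_eq_iff
  by (rule trace_equiv_sym, rule trace_equiv_mono[OF assms trace_equiv_some_trace_of])

lemma fsupp_mr_delta: "fsupp (mr_delta u) = {u}"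
  unfolding fsupp_def mr_delta_def by auto

lemma mr_mult_mr_delta:
  "mr_mult I x (mr_delta u) t = (\<Sum>p\<in>{p\<in>fsupp x. tmult I p u = t}. x p)"
proof -
  have "{(p, q). p \<in> fsupp x \<and> q \<in> fsupp (mr_delta u) \<and> tmult I p q = t}
        = (\<lambda>p. (p, u)) ` {p\<in>fsupp x. tmult I p u = t}"
    unfolding fsupp_mr_delta by auto
  moreover have "inj_on (\<lambda>p. (p, u)) {p\<in>fsupp x. tmult I p u = t}"
    by (auto simp: inj_on_def)
  ultimately show ?thesis
    unfolding mr_mult_def by (simp add: sum.reindex mr_delta_def)
qed

locale unique_factorisation =
  fixes I :: "('a \<times> 'a) set" and M M0 B :: "'a list set set"
  assumes basis_subset: "B \<subseteq> M"
    and factorisation_exists: "\<forall>w\<in>M. \<exists>a\<in>M0. \<exists>u\<in>B. w = tmult I a u"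
    and factorisation_unique:
      "\<forall>a\<in>M0. \<forall>b\<in>M0. \<forall>u\<in>B. \<forall>v\<in>B. tmult I a u = tmult I b v \<longrightarrow> a = b \<and> u = v"
    and tmult_closed: "\<forall>a\<in>M0. \<forall>u\<in>B. tmult I a u \<in> M"
begin

definition coeff_family :: "('a list set \<Rightarrow> 'a list set \<Rightarrow> int) \<Rightarrow> bool" where
  "coeff_family c \<longleftrightarrow> (\<forall>u. c u \<in> monoid_ring M0) \<and> (\<forall>u. u \<notin> B \<longrightarrow> c u = (\<lambda>_. 0)) \<and>
     finite {u. c u \<noteq> (\<lambda>_. 0)}"

definition combination :: "('a list set \<Rightarrow> 'a list set \<Rightarrow> int) \<Rightarrow> 'a list set \<Rightarrow> int" where
  "combination c = (\<lambda>t. \<Sum>u\<in>{u. c u \<noteq> (\<lambda>_. 0)}. mr_mult I (c u) (mr_delta u) t)"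

definition coeffs :: "('a list set \<Rightarrow> int) \<Rightarrow> 'a list set \<Rightarrow> 'a list set \<Rightarrow> int" where
  "coeffs f u = (\<lambda>a. if u \<in> B \<and> a \<in> M0 then f (tmult I a u) else 0)"

definition basis_part :: "'a list set \<Rightarrow> 'a list set" where
  "basis_part t = (THE u. u \<in> B \<and> (\<exists>a\<in>M0. t = tmult I a u))"

lemma basis_part_tmult: "a \<in> M0 \<Longrightarrow> u \<in> B \<Longrightarrow> basis_part (tmult I a u) = u"
  unfolding basis_part_def by (rule the_equality) (use factorisation_unique in blast)+

lemma coeff_family_supp:
  assumes "coeff_family c"
  shows "c u \<noteq> (\<lambda>_. 0) \<Longrightarrow> u \<in> B" and "fsupp (c u) \<subseteq> M0"
  using assms unfolding coeff_family_def monoid_ring_def by auto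

lemma combination_tmult:
  assumes "coeff_family c" and "a \<in> M0" and "u \<in> B"
  shows "combination c (tmult I a u) = c u a"
proof -
  let ?U = "{u. c u \<noteq> (\<lambda>_. 0)}"
  have "mr_mult I (c u') (mr_delta u') (tmult I a u) = (if u' = u then c u a else 0)"
    if "u' \<in> ?U" for u'
  proof -
    have "{a' \<in> fsupp (c u'). tmult I a' u' = tmult I a u} =
          (if u' = u \<and> a \<in> fsupp (c u) then {a} else {})"
      using factorisation_unique coeff_family_supp[OF assms(1)] that assms(2,3) by auto
    then show ?thesis unfolding mr_mult_mr_delta by (auto simp: fsupp_def)
  qed
  then have "combination c (tmult I a u) = (\<Sum>u'\<in>?U. if u' = u then c u a else 0)"
    unfolding combination_def by simp
  also have "\<dots> = c u a"
    using assms(1) unfolding coeff_family_def by auto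
  finally show ?thesis .
qed

lemma combination_outside:
  assumes "coeff_family c" and "t \<notin> M"
  shows "combination c t = 0"
  unfolding combination_def
proof (rule sum.neutral, rule ballI)
  fix u assume "u \<in> {u. c u \<noteq> (\<lambda>_. 0)}"
  then have "{a \<in> fsupp (c u). tmult I a u = t} = {}"
    using tmult_closed coeff_family_supp[OF assms(1)] assms(2) by auto
  then show "mr_mult I (c u) (mr_delta u) t = 0" by (simp only: mr_mult_mr_delta sum.empty)
qed

lemma coeff_family_coeffs:
  assumes "f \<in> monoid_ring M"
  shows "coeff_family (coeffs f)"
proof -
  have fin: "finite (fsupp f)" and "fsupp f \<subseteq> M"
    using assms unfolding monoid_ring_def by auto
  have "coeffs f u \<in> monoid_ring M0" for u
  proof (cases "u \<in> B")
    case True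
    have "inj_on (\<lambda>a. tmult I a u) M0"
      using factorisation_unique True by (auto simp: inj_on_def)
    then have "finite ((\<lambda>a. tmult I a u) -` fsupp f \<inter> M0)"
      by (rule finite_vimage_IntI[OF fin])
    moreover have "fsupp (coeffs f u) \<subseteq> (\<lambda>a. tmult I a u) -` fsupp f \<inter> M0"
      unfolding coeffs_def fsupp_def by auto
    ultimately show ?thesis
      unfolding monoid_ring_def using finite_subset by blast
  qed (simp add: coeffs_def monoid_ring_def fsupp_def)
  moreover have "{u. coeffs f u \<noteq> (\<lambda>_. 0)} \<subseteq> basis_part ` fsupp f"
  proof
    fix u assume "u \<in> {u. coeffs f u \<noteq> (\<lambda>_. 0)}"
    then obtain a where "coeffs f u a \<noteq> 0" by auto
    then have "u \<in> B" "a \<in> M0" "f (tmult I a u) \<noteq> 0"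
      unfolding coeffs_def by (auto split: if_splits)
    then show "u \<in> basis_part ` fsupp f"
      by (intro rev_image_eqI[of "tmult I a u"]) (simp_all add: fsupp_def basis_part_tmult)
  qed
  then have "finite {u. coeffs f u \<noteq> (\<lambda>_. 0)}"
    using finite_subset finite_imageI[OF fin] by blast
  ultimately show ?thesis
    unfolding coeff_family_def by (simp add: coeffs_def)
qed

lemma combination_coeffs:
  assumes "f \<in> monoid_ring M"
  shows "combination (coeffs f) = f"
proof
  fix t
  show "combination (coeffs f) t = f t"
  proof (cases "t \<in> M")
    case True
    then obtain a u where "a \<in> M0" "u \<in> B" "t = tmult I a u"
      using factorisation_exists by blast
    then show ?thesis
      using combination_tmult[OF coeff_family_coeffs[OF assms]] by (simp add: coeffs_def)
  next
    case False
    then have "f t = 0" using assms unfolding monoid_ring_def fsupp_def by auto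
    then show ?thesis
      using combination_outside[OF coeff_family_coeffs[OF assms] False] by simp
  qed
qed

lemma coeffs_combination:
  assumes "coeff_family c"
  shows "coeffs (combination c) = c"
proof (intro ext)
  fix u a
  show "coeffs (combination c) u a = c u a"
  proof (cases "u \<in> B \<and> a \<in> M0")
    case True
    then show ?thesis by (simp add: coeffs_def combination_tmult[OF assms])
  next
    case False
    then have "c u a = 0"
      using assms unfolding coeff_family_def monoid_ring_def fsupp_def by auto
    then show ?thesis using False by (auto simp: coeffs_def)
  qed
qed

lemma free_left_basis: "is_free_left_basis I M M0 B"
  unfolding is_free_left_basis_def
proof (intro conjI basis_subset ballI)
  fix f assume "f \<in> monoid_ring M"
  then have "\<exists>!c. coeff_family c \<and> f = combination c"
  proof (intro ex1I[of _ "coeffs f"] conjI)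
    fix c assume "coeff_family c \<and> f = combination c"
    then show "c = coeffs f" using coeffs_combination by auto
  qed (simp_all add: coeff_family_coeffs combination_coeffs)
  then show "\<exists>!c. (\<forall>u. c u \<in> monoid_ring M0) \<and> (\<forall>u. u \<notin> B \<longrightarrow> c u = (\<lambda>_. 0)) \<and>
      finite {u. c u \<noteq> (\<lambda>_. 0)} \<and>
      f = (\<lambda>t. \<Sum>u\<in>{u. c u \<noteq> (\<lambda>_. 0)}. mr_mult I (c u) (mr_delta u) t)"
    unfolding coeff_family_def combination_def by simp
qed

end

lemma trace_monoid_unique_factorisation:
  assumes "sym I" and "irrefl I" and "\<Sigma>0 \<subseteq> \<Sigma>"
  shows "unique_factorisation I (trace_of I ` lists \<Sigma>) (trace_of I ` lists \<Sigma>0)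
           (trace_of I ` {u \<in> lists \<Sigma>. min_letters I u \<inter> \<Sigma>0 = {}})"
    (is "unique_factorisation I ?M ?N ?B")
proof
  show "?B \<subseteq> ?M" by blast
  show "\<forall>w\<in>?M. \<exists>a\<in>?N. \<exists>u\<in>?B. w = tmult I a u"
  proof
    fix w assume "w \<in> ?M"
    then obtain v where "v \<in> lists \<Sigma>" and "w = trace_of I v" by blast
    then obtain a u where "a \<in> lists \<Sigma>0" "u \<in> lists \<Sigma>" "min_letters I u \<inter> \<Sigma>0 = {}"
      and "w = tmult I (trace_of I a) (trace_of I u)"
      using trace_equiv_decomp_exists by (metis tmult_trace_of trace_of_eq_iff)
    then show "\<exists>a\<in>?N. \<exists>u\<in>?B. w = tmult I a u" by blast
  qed
  show "\<forall>a\<in>?N. \<forall>b\<in>?N. \<forall>u\<in>?B. \<forall>v\<in>?B. tmult I a u = tmult I b v \<longrightarrow> a = b \<and> u = v"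
  proof (intro ballI impI)
    fix a b u v
    assume "a \<in> ?N" "b \<in> ?N" "u \<in> ?B" "v \<in> ?B" and "tmult I a u = tmult I b v"
    then obtain a' b' u' v' where "a' \<in> lists \<Sigma>0" "b' \<in> lists \<Sigma>0"
      "min_letters I u' \<inter> \<Sigma>0 = {}" "min_letters I v' \<inter> \<Sigma>0 = {}"
      and words: "a = trace_of I a'" "b = trace_of I b'" "u = trace_of I u'" "v = trace_of I v'"
      by blast
    moreover from words have "trace_equiv I (a' @ u') (b' @ v')"
      using \<open>tmult I a u = tmult I b v\<close> by (simp add: tmult_trace_of trace_of_eq_iff)
    ultimately show "a = b \<and> u = v"
      using trace_equiv_decomp_unique[OF assms(1,2)] by (simp add: trace_of_eq_iff)
  qed
  show "\<forall>a\<in>?N. \<forall>u\<in>?B. tmult I a u \<in> ?M"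
    using assms(3) by (force simp: tmult_trace_of)
qed

theorem mainTheorem3:
  fixes \<Sigma> \<Sigma>0 :: "'a::linorder set" and I :: "('a \<times> 'a) set"
  assumes "finite \<Sigma>" and "I \<subseteq> \<Sigma> \<times> \<Sigma>" and "sym I" and "irrefl I"
    and "\<Sigma>0 \<subseteq> \<Sigma>"
  defines "M \<equiv> trace_monoid \<Sigma> I"
    and "I0 \<equiv> (\<Sigma>0 \<times> \<Sigma>0) \<inter> I"
  defines "M0 \<equiv> tembed I ` trace_monoid \<Sigma>0 I0"
    and "B \<equiv> {t \<in> M. t = tone I \<or>
                 (t \<noteq> tone I \<and> (\<exists>fs. is_foata_nf \<Sigma> I t fs \<and> set (hd fs) \<subseteq> \<Sigma> - \<Sigma>0))}"
  shows "(\<forall>w \<in> M. \<exists>a \<in> M0. \<exists>u \<in> B. w = tmult I a u)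
       \<and> (\<forall>a \<in> M0. \<forall>b \<in> M0. \<forall>u \<in> B. \<forall>v \<in> B.
            tmult I a u = tmult I b v \<longrightarrow> a = b \<and> u = v)
       \<and> is_free_left_basis I M M0 B"
proof -
  have M: "M = trace_of I ` lists \<Sigma>"
    unfolding M_def trace_monoid_def ..
  have "I0 \<subseteq> I" unfolding I0_def by blast
  then have M0: "M0 = trace_of I ` lists \<Sigma>0"
    by (simp add: M0_def trace_monoid_def image_image tembed_trace_of)
  have B: "B = trace_of I ` {u \<in> lists \<Sigma>. min_letters I u \<inter> \<Sigma>0 = {}}"
    unfolding B_def M using foata_hd_disjoint_iff[OF assms(2-4)] by blast
  interpret unique_factorisation I M M0 B
    unfolding M M0 B by (rule trace_monoid_unique_factorisation[OF assms(3-5)])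
  show ?thesis using factorisation_exists factorisation_unique free_left_basis by blast
qed

end
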